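(* Let $R:\mathcal{C}\to\mathcal{D}$ and $L:\mathcal{D}\to\mathcal{C}$ be functors with $L$ left adjoint to $R$. Let $\mathcal{A}$ be a set of basic morphisms in $\mathcal{C}$ and $\mathcal{A}'$ a set of basic morphisms in $\mathcal{D}$ (all of unit cost) such that $R(\mathcal{A})\subset\mathcal{A}'$ and $L(\mathcal{A}')\subset\mathcal{A}$. Then for every finite diagram $D$ in $\mathcal{C}$ and every finite diagram $D'$ in $\mathcal{D}$, $$c^{\lim}_{\mathcal{D},\mathcal{A}'}(R(D))\le c^{\lim}_{\mathcal{C},\mathcal{A}}(D),\qquad c^{\mathrm{colim}}_{\mathcal{C},\mathcal{A}}(L(D'))\le c^{\mathrm{colim}}_{\mathcal{D},\mathcal{A}'}(D').$$
   Context: A diagram of finite shape $I=(V,E,s,t)$ in a category assigns objects to vertices and morphisms $D(e):D(s(e))\to D(t(e))$ to edges (no commutativity required); the image $F(D)$ under a functor $F$ is obtained by applying $F$ to all objects and morphisms. Subdiagrams are restrictions to full subgraphs. A limit computation with basic morphisms $\mathcal{A}$ is a sequence of diagrams $(D_0,\dots,D_s)$ where $D_0$ consists only of morphisms in $\mathcal{A}$ and each $D_i$ ($i\ge1$) is obtained from $D_{i-1}$ by choosing a full subgraph $J_i$, adding a new vertex $v_i$ carrying a limit of $D_{i-1}|_{J_i}$ with edges from $v_i$ to each vertex of $J_i$ carrying the limit cone morphisms, subject to constructivity: if $v_i$ lies in $J_j$ for some $j>i$ then $J_i\subseteq J_j$. Colimit computations are defined dually (colimits, cocone edges into the new vertex,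 same constructivity). A computation computes $D$ if $D$ is isomorphic to a not-necessarily-full subdiagram of $D_s$; its cost is $s$ plus the number of edges of $D_0$. $c^{\lim}_{\mathcal{C},\mathcal{A}}(D)$ (resp. $c^{\mathrm{colim}}_{\mathcal{C},\mathcal{A}}(D)$) is the minimum cost of a limit (resp. colimit) computation computing $D$, or $\infty$ if none exists. *)

theory Defs
  imports Main "HOL-Library.Extended_Nat"
begin

record ('o,'m) cat =
  Obj :: "'o set"
  Mor :: "'m set"
  CDom :: "'m \<Rightarrow> 'o"
  CCod :: "'m \<Rightarrow> 'o"
  CId :: "'o \<Rightarrow> 'm"
  Comp :: "'m \<Rightarrow> 'm \<Rightarrow> 'm"   (* Comp C g f = g o f *)

definition Hom :: "('o,'m) cat \<Rightarrow> 'o \<Rightarrow> 'o \<Rightarrow> 'm set" where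
  "Hom C x y = {f \<in> Mor C. CDom C f = x \<and> CCod C f = y}"

definition category :: "('o,'m) cat \<Rightarrow> bool" where
  "category C \<longleftrightarrow>
     (\<forall>f\<in>Mor C. CDom C f \<in> Obj C \<and> CCod C f \<in> Obj C) \<and>
     (\<forall>x\<in>Obj C. CId C x \<in> Hom C x x) \<and>
     (\<forall>f\<in>Mor C. \<forall>g\<in>Mor C. CCod C f = CDom C g \<longrightarrow>
        Comp C g f \<in> Hom C (CDom C f) (CCod C g)) \<and>
     (\<forall>f\<in>Mor C. Comp C f (CId C (CDom C f)) = f \<and> Comp C (CId C (CCod C f)) f = f) \<and>
     (\<forall>f\<in>Mor C. \<forall>g\<in>Mor C. \<forall>h\<in>Mor C. CCod C f = CDom C g \<and> CCod C g = CDom C h \<longrightarrow>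
        Comp C h (Comp C g f) = Comp C (Comp C h g) f)"

record ('o1,'m1,'o2,'m2) ftor =
  FObj :: "'o1 \<Rightarrow> 'o2"
  FMor :: "'m1 \<Rightarrow> 'm2"

definition is_functor :: "('o1,'m1) cat \<Rightarrow> ('o2,'m2) cat \<Rightarrow> ('o1,'m1,'o2,'m2) ftor \<Rightarrow> bool" where
  "is_functor C D F \<longleftrightarrow> category C \<and> category D \<and>
     (\<forall>x\<in>Obj C. FObj F x \<in> Obj D) \<and>
     (\<forall>x\<in>Obj C. \<forall>y\<in>Obj C. \<forall>f\<in>Hom C x y. FMor F f \<in> Hom D (FObj F x) (FObj F y)) \<and>
     (\<forall>x\<in>Obj C. FMor F (CId C x) = CId D (FObj F x)) \<and>
     (\<forall>f\<in>Mor C. \<forall>g\<in>Mor C. CCod C f = CDom C g \<longrightarrow>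
        FMor F (Comp C g f) = Comp D (FMor F g) (FMor F f))"

definition adjunction ::
  "('o1,'m1) cat \<Rightarrow> ('o2,'m2) cat \<Rightarrow> ('o2,'m2,'o1,'m1) ftor \<Rightarrow> ('o1,'m1,'o2,'m2) ftor \<Rightarrow> bool" where
  "adjunction C D L R \<longleftrightarrow> is_functor D C L \<and> is_functor C D R \<and>
     (\<exists>\<phi> :: 'o2 \<Rightarrow> 'o1 \<Rightarrow> 'm1 \<Rightarrow> 'm2.
        (\<forall>d\<in>Obj D. \<forall>c\<in>Obj C. bij_betw (\<phi> d c) (Hom C (FObj L d) c) (Hom D d (FObj R c))) \<and>
        (\<forall>d\<in>Obj D. \<forall>d'\<in>Obj D. \<forall>c\<in>Obj C. \<forall>c'\<in>Obj C.
           \<forall>h\<in>Hom D d' d. \<forall>g\<in>Hom C (FObj L d) c. \<forall>k\<in>Hom C c c'.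
             \<phi> d' c' (Comp C k (Comp C g (FMor L h))) = Comp D (FMor R k) (Comp D (\<phi> d c g) h)))"

record ('v,'e,'o,'m) diagram =
  DV :: "'v set"
  DE :: "'e set"
  Src :: "'e \<Rightarrow> 'v"
  Tgt :: "'e \<Rightarrow> 'v"
  DObj :: "'v \<Rightarrow> 'o"
  DMor :: "'e \<Rightarrow> 'm"

definition is_diagram :: "('o,'m) cat \<Rightarrow> ('v,'e,'o,'m) diagram \<Rightarrow> bool" where
  "is_diagram C D \<longleftrightarrow> finite (DV D) \<and> finite (DE D) \<and>
     (\<forall>v\<in>DV D. DObj D v \<in> Obj C) \<and>
     (\<forall>e\<in>DE D. Src D e \<in> DV D \<and> Tgt D e \<in> DV D \<and>
        DMor D e \<in> Hom C (DObj D (Src D e)) (DObj D (Tgt D e)))"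

definition map_diag :: "('o1,'m1,'o2,'m2) ftor \<Rightarrow> ('v,'e,'o1,'m1) diagram \<Rightarrow> ('v,'e,'o2,'m2) diagram" where
  "map_diag F D = \<lparr>DV = DV D, DE = DE D, Src = Src D, Tgt = Tgt D,
      DObj = FObj F \<circ> DObj D, DMor = FMor F \<circ> DMor D\<rparr>"

definition restrict_diag :: "('v,'e,'o,'m) diagram \<Rightarrow> 'v set \<Rightarrow> ('v,'e,'o,'m) diagram" where
  "restrict_diag D J = \<lparr>DV = J, DE = {e\<in>DE D. Src D e \<in> J \<and> Tgt D e \<in> J}, Src = Src D, Tgt = Tgt D,
      DObj = DObj D, DMor = DMor D\<rparr>"

definition is_cone :: "('o,'m) cat \<Rightarrow> ('v,'e,'o,'m) diagram \<Rightarrow> 'o \<Rightarrow> ('v \<Rightarrow> 'm) \<Rightarrow> bool" where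
  "is_cone C D X \<pi> \<longleftrightarrow> X \<in> Obj C \<and>
     (\<forall>v\<in>DV D. \<pi> v \<in> Hom C X (DObj D v)) \<and>
     (\<forall>e\<in>DE D. Comp C (DMor D e) (\<pi> (Src D e)) = \<pi> (Tgt D e))"

definition is_limit :: "('o,'m) cat \<Rightarrow> ('v,'e,'o,'m) diagram \<Rightarrow> 'o \<Rightarrow> ('v \<Rightarrow> 'm) \<Rightarrow> bool" where
  "is_limit C D X \<pi> \<longleftrightarrow> is_cone C D X \<pi> \<and>
     (\<forall>Y \<rho>. is_cone C D Y \<rho> \<longrightarrow> (\<exists>!u. u \<in> Hom C Y X \<and> (\<forall>v\<in>DV D. Comp C (\<pi> v) u = \<rho> v)))"

definition is_cocone :: "('o,'m) cat \<Rightarrow> ('v,'e,'o,'m) diagram \<Rightarrow> 'o \<Rightarrow> ('v \<Rightarrow> 'm) \<Rightarrow> bool" where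
  "is_cocone C D X \<sigma> \<longleftrightarrow> X \<in> Obj C \<and>
     (\<forall>v\<in>DV D. \<sigma> v \<in> Hom C (DObj D v) X) \<and>
     (\<forall>e\<in>DE D. Comp C (\<sigma> (Tgt D e)) (DMor D e) = \<sigma> (Src D e))"

definition is_colimit :: "('o,'m) cat \<Rightarrow> ('v,'e,'o,'m) diagram \<Rightarrow> 'o \<Rightarrow> ('v \<Rightarrow> 'm) \<Rightarrow> bool" where
  "is_colimit C D X \<sigma> \<longleftrightarrow> is_cocone C D X \<sigma> \<and>
     (\<forall>Y \<tau>. is_cocone C D Y \<tau> \<longrightarrow> (\<exists>!u. u \<in> Hom C X Y \<and> (\<forall>v\<in>DV D. Comp C u (\<sigma> v) = \<tau> v)))"

text \<open>One step of a limit computation: add a new vertex v carrying a limit X of the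
  restriction of D to J, with new edges (named by the injective map ed) from v to
  each vertex j of J, carrying the cone morphisms.\<close>
definition lim_step :: "('o,'m) cat \<Rightarrow> ('v,'e,'o,'m) diagram \<Rightarrow> 'v set \<Rightarrow> 'v \<Rightarrow> ('v,'e,'o,'m) diagram \<Rightarrow> bool" where
  "lim_step C D J v D' \<longleftrightarrow> J \<subseteq> DV D \<and> v \<notin> DV D \<and>
     (\<exists>X \<pi> ed. is_limit C (restrict_diag D J) X \<pi> \<and> inj_on ed J \<and> ed ` J \<inter> DE D = {} \<and>
        D' = \<lparr>DV = insert v (DV D), DE = DE D \<union> ed ` J,
              Src = (\<lambda>e. if e \<in> DE D then Src D e else v),
              Tgt = (\<lambda>e. if e \<in> DE D then Tgt D e else the_inv_into J ed e),
              DObj = (DObj D)(v := X),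
              DMor = (\<lambda>e. if e \<in> DE D then DMor D e else \<pi> (the_inv_into J ed e))\<rparr>)"

definition colim_step :: "('o,'m) cat \<Rightarrow> ('v,'e,'o,'m) diagram \<Rightarrow> 'v set \<Rightarrow> 'v \<Rightarrow> ('v,'e,'o,'m) diagram \<Rightarrow> bool" where
  "colim_step C D J v D' \<longleftrightarrow> J \<subseteq> DV D \<and> v \<notin> DV D \<and>
     (\<exists>X \<sigma> ed. is_colimit C (restrict_diag D J) X \<sigma> \<and> inj_on ed J \<and> ed ` J \<inter> DE D = {} \<and>
        D' = \<lparr>DV = insert v (DV D), DE = DE D \<union> ed ` J,
              Src = (\<lambda>e. if e \<in> DE D then Src D e else the_inv_into J ed e),
              Tgt = (\<lambda>e. if e \<in> DE D then Tgt D e else v),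
              DObj = (DObj D)(v := X),
              DMor = (\<lambda>e. if e \<in> DE D then DMor D e else \<sigma> (the_inv_into J ed e))\<rparr>)"

definition is_lim_computation ::
  "('o,'m) cat \<Rightarrow> 'm set \<Rightarrow> (nat \<Rightarrow> (nat,nat,'o,'m) diagram) \<Rightarrow> (nat \<Rightarrow> nat set) \<Rightarrow> (nat \<Rightarrow> nat) \<Rightarrow> nat \<Rightarrow> bool" where
  "is_lim_computation C A Ds Js vs s \<longleftrightarrow>
     is_diagram C (Ds 0) \<and> (\<forall>e\<in>DE (Ds 0). DMor (Ds 0) e \<in> A) \<and>
     (\<forall>i\<in>{1..s}. lim_step C (Ds (i - 1)) (Js i) (vs i) (Ds i)) \<and>
     (\<forall>i j. 1 \<le> i \<and> i < j \<and> j \<le> s \<and> vs i \<in> Js j \<longrightarrow> Js i \<subseteq> Js j)"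

definition is_colim_computation ::
  "('o,'m) cat \<Rightarrow> 'm set \<Rightarrow> (nat \<Rightarrow> (nat,nat,'o,'m) diagram) \<Rightarrow> (nat \<Rightarrow> nat set) \<Rightarrow> (nat \<Rightarrow> nat) \<Rightarrow> nat \<Rightarrow> bool" where
  "is_colim_computation C A Ds Js vs s \<longleftrightarrow>
     is_diagram C (Ds 0) \<and> (\<forall>e\<in>DE (Ds 0). DMor (Ds 0) e \<in> A) \<and>
     (\<forall>i\<in>{1..s}. colim_step C (Ds (i - 1)) (Js i) (vs i) (Ds i)) \<and>
     (\<forall>i j. 1 \<le> i \<and> i < j \<and> j \<le> s \<and> vs i \<in> Js j \<longrightarrow> Js i \<subseteq> Js j)"

definition iso_subdiag :: "('v,'e,'o,'m) diagram \<Rightarrow> ('w,'f,'o,'m) diagram \<Rightarrow> bool" where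
  "iso_subdiag D D' \<longleftrightarrow> (\<exists>fv fe.
     inj_on fv (DV D) \<and> fv ` DV D \<subseteq> DV D' \<and> inj_on fe (DE D) \<and> fe ` DE D \<subseteq> DE D' \<and>
     (\<forall>v\<in>DV D. DObj D' (fv v) = DObj D v) \<and>
     (\<forall>e\<in>DE D. Src D' (fe e) = fv (Src D e) \<and> Tgt D' (fe e) = fv (Tgt D e) \<and>
        DMor D' (fe e) = DMor D e))"

definition c_lim :: "('o,'m) cat \<Rightarrow> 'm set \<Rightarrow> ('v,'e,'o,'m) diagram \<Rightarrow> enat" where
  "c_lim C A D = Inf {enat (s + card (DE (Ds 0))) | (Ds :: nat \<Rightarrow> (nat,nat,'o,'m) diagram) Js vs s.
      is_lim_computation C A Ds Js vs s \<and> iso_subdiag D (Ds s)}"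

definition c_colim :: "('o,'m) cat \<Rightarrow> 'm set \<Rightarrow> ('v,'e,'o,'m) diagram \<Rightarrow> enat" where
  "c_colim C A D = Inf {enat (s + card (DE (Ds 0))) | (Ds :: nat \<Rightarrow> (nat,nat,'o,'m) diagram) Js vs s.
      is_colim_computation C A Ds Js vs s \<and> iso_subdiag D (Ds s)}"

end

theory Submission
  imports Defs
begin

(* A right adjoint preserves limits: transposing along the adjunction turns cones over R(K)
   with vertex Y into cones over K with vertex L(Y), and mediating maps into mediating maps.
   Hence applying R to every diagram of a limit computation of D yields a limit computation
   of R(D) of the same cost: basic morphisms go to basic morphisms, every limit cone added in
   a step goes to a limit cone of the image subdiagram, and the shape data (subgraphs, new
   vertices, constructivity) is untouched. The colimit inequality is the same argument in the
   opposite categories, where R^op is left adjoint to L^op. *)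

lemma Hom_iff: "f \<in> Hom C x y \<longleftrightarrow> f \<in> Mor C \<and> CDom C f = x \<and> CCod C f = y"
  by (simp add: Hom_def)

lemma
  assumes "category C"
  shows Hom_Obj: "f \<in> Hom C x y \<Longrightarrow> x \<in> Obj C \<and> y \<in> Obj C"
    and id_in_Hom: "x \<in> Obj C \<Longrightarrow> CId C x \<in> Hom C x x"
    and comp_in_Hom: "f \<in> Hom C x y \<Longrightarrow> g \<in> Hom C y z \<Longrightarrow> Comp C g f \<in> Hom C x z"
    and comp_id_left: "f \<in> Hom C x y \<Longrightarrow> Comp C (CId C y) f = f"
    and comp_id_right: "f \<in> Hom C x y \<Longrightarrow> Comp C f (CId C x) = f"
  using assms unfolding category_def Hom_iff by auto

lemma
  assumes "is_functor C D F"
  shows functor_Obj: "x \<in> Obj C \<Longrightarrow> FObj F x \<in> Obj D"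
    and functor_Hom: "f \<in> Hom C x y \<Longrightarrow> FMor F f \<in> Hom D (FObj F x) (FObj F y)"
    and functor_id: "x \<in> Obj C \<Longrightarrow> FMor F (CId C x) = CId D (FObj F x)"
    and functor_comp: "f \<in> Hom C x y \<Longrightarrow> g \<in> Hom C y z \<Longrightarrow>
      FMor F (Comp C g f) = Comp D (FMor F g) (FMor F f)"
proof -
  have C: "category C" using assms by (simp add: is_functor_def)
  show "x \<in> Obj C \<Longrightarrow> FObj F x \<in> Obj D" "x \<in> Obj C \<Longrightarrow> FMor F (CId C x) = CId D (FObj F x)"
    using assms by (simp_all add: is_functor_def)
  show "f \<in> Hom C x y \<Longrightarrow> FMor F f \<in> Hom D (FObj F x) (FObj F y)"
    using assms Hom_Obj[OF C] unfolding is_functor_def by blast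
  show "f \<in> Hom C x y \<Longrightarrow> g \<in> Hom C y z \<Longrightarrow> FMor F (Comp C g f) = Comp D (FMor F g) (FMor F f)"
    using assms unfolding is_functor_def Hom_iff by auto
qed

definition op_cat :: "('o,'m) cat \<Rightarrow> ('o,'m) cat" where
  "op_cat C = \<lparr>Obj = Obj C, Mor = Mor C, CDom = CCod C, CCod = CDom C, CId = CId C,
     Comp = (\<lambda>g f. Comp C f g)\<rparr>"

lemma op_cat_simps [simp]:
  "Obj (op_cat C) = Obj C" "Mor (op_cat C) = Mor C" "CDom (op_cat C) = CCod C"
  "CCod (op_cat C) = CDom C" "CId (op_cat C) = CId C" "Comp (op_cat C) g f = Comp C f g"
  by (simp_all add: op_cat_def)

lemma Hom_op_cat [simp]: "Hom (op_cat C) x y = Hom C y x"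
  by (auto simp: Hom_def)

lemma category_op_cat: "category C \<Longrightarrow> category (op_cat C)"
  unfolding category_def by (simp add: Hom_iff)

lemma is_functor_op_cat: "is_functor C D F \<Longrightarrow> is_functor (op_cat C) (op_cat D) F"
  unfolding is_functor_def by (simp add: category_op_cat Hom_iff)

lemma map_diag_simps [simp]:
  "DV (map_diag F K) = DV K" "DE (map_diag F K) = DE K"
  "Src (map_diag F K) = Src K" "Tgt (map_diag F K) = Tgt K"
  "DObj (map_diag F K) v = FObj F (DObj K v)" "DMor (map_diag F K) e = FMor F (DMor K e)"
  by (simp_all add: map_diag_def)

lemma restrict_diag_simps [simp]:
  "DV (restrict_diag K J) = J" "DE (restrict_diag K J) = {e \<in> DE K. Src K e \<in> J \<and> Tgt K e \<in> J}"
  "Src (restrict_diag K J) = Src K" "Tgt (restrict_diag K J) = Tgt K"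
  "DObj (restrict_diag K J) = DObj K" "DMor (restrict_diag K J) = DMor K"
  by (simp_all add: restrict_diag_def)

lemma is_diagram_map_diag: "is_functor C D F \<Longrightarrow> is_diagram C K \<Longrightarrow> is_diagram D (map_diag F K)"
  unfolding is_diagram_def by (simp add: functor_Obj functor_Hom)

lemma is_diagram_restrict_diag: "is_diagram C K \<Longrightarrow> J \<subseteq> DV K \<Longrightarrow> is_diagram C (restrict_diag K J)"
  unfolding is_diagram_def by (auto intro: finite_subset)

lemma restrict_diag_map_diag: "restrict_diag (map_diag F K) J = map_diag F (restrict_diag K J)"
  by (simp add: restrict_diag_def map_diag_def)

lemma iso_subdiag_map_diag: "iso_subdiag K K' \<Longrightarrow> iso_subdiag (map_diag F K) (map_diag F K')"
  unfolding iso_subdiag_def by simp metis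

lemma functor_map_cone:
  assumes F: "is_functor C D F" and K: "is_diagram C K" and cone: "is_cone C K X \<pi>"
  shows "is_cone D (map_diag F K) (FObj F X) (FMor F \<circ> \<pi>)"
proof -
  have "Comp D (FMor F (DMor K e)) (FMor F (\<pi> (Src K e))) = FMor F (\<pi> (Tgt K e))" if "e \<in> DE K" for e
    using that cone K functor_comp[OF F] unfolding is_cone_def is_diagram_def by metis
  then show ?thesis
    using cone unfolding is_cone_def by (simp add: functor_Obj[OF F] functor_Hom[OF F])
qed

definition op_diag :: "('v,'e,'o,'m) diagram \<Rightarrow> ('v,'e,'o,'m) diagram" where
  "op_diag K = \<lparr>DV = DV K, DE = DE K, Src = Tgt K, Tgt = Src K, DObj = DObj K, DMor = DMor K\<rparr>"

lemma op_diag_simps [simp]: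
  "DV (op_diag K) = DV K" "DE (op_diag K) = DE K" "Src (op_diag K) = Tgt K" "Tgt (op_diag K) = Src K"
  "DObj (op_diag K) = DObj K" "DMor (op_diag K) = DMor K"
  by (simp_all add: op_diag_def)

lemma op_diag_op_diag [simp]: "op_diag (op_diag K) = K"
  by (simp add: op_diag_def)

lemma op_diag_eq_iff: "op_diag K = K' \<longleftrightarrow> K = op_diag K'"
  by auto

lemma is_diagram_op_diag [simp]: "is_diagram (op_cat C) (op_diag K) \<longleftrightarrow> is_diagram C K"
  unfolding is_diagram_def by auto

lemma is_cone_op [simp]: "is_cone (op_cat C) (op_diag K) X \<sigma> \<longleftrightarrow> is_cocone C K X \<sigma>"
  by (simp add: is_cone_def is_cocone_def)

lemma is_limit_op [simp]: "is_limit (op_cat C) (op_diag K) X \<sigma> \<longleftrightarrow> is_colimit C K X \<sigma>"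
  by (simp add: is_limit_def is_colimit_def)

lemma restrict_diag_op_diag: "restrict_diag (op_diag K) J = op_diag (restrict_diag K J)"
  by (auto simp: restrict_diag_def op_diag_def)

lemma map_diag_op_diag: "map_diag F (op_diag K) = op_diag (map_diag F K)"
  by (simp add: map_diag_def op_diag_def)

lemma iso_subdiag_op_diag [simp]: "iso_subdiag (op_diag K) (op_diag K') \<longleftrightarrow> iso_subdiag K K'"
  unfolding iso_subdiag_def by (simp add: conj_left_commute)

lemma bij_betw_ex1_iff:
  assumes "bij_betw f A B" and "\<And>a. a \<in> A \<Longrightarrow> P a \<longleftrightarrow> Q (f a)"
  shows "(\<exists>!a. a \<in> A \<and> P a) \<longleftrightarrow> (\<exists>!b. b \<in> B \<and> Q b)"
  using assms unfolding bij_betw_def inj_on_def by blast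

locale hom_adjunction =
  fixes C :: "('o1,'m1) cat" and Dc :: "('o2,'m2) cat"
    and L :: "('o2,'m2,'o1,'m1) ftor" and R :: "('o1,'m1,'o2,'m2) ftor"
    and \<phi> :: "'o2 \<Rightarrow> 'o1 \<Rightarrow> 'm1 \<Rightarrow> 'm2"
  assumes L_functor: "is_functor Dc C L" and R_functor: "is_functor C Dc R"
    and \<phi>_bij: "\<forall>d\<in>Obj Dc. \<forall>c\<in>Obj C. bij_betw (\<phi> d c) (Hom C (FObj L d) c) (Hom Dc d (FObj R c))"
    and \<phi>_natural: "\<forall>d\<in>Obj Dc. \<forall>d'\<in>Obj Dc. \<forall>c\<in>Obj C. \<forall>c'\<in>Obj C.
      \<forall>h\<in>Hom Dc d' d. \<forall>g\<in>Hom C (FObj L d) c. \<forall>k\<in>Hom C c c'.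
        \<phi> d' c' (Comp C k (Comp C g (FMor L h))) = Comp Dc (FMor R k) (Comp Dc (\<phi> d c g) h)"

lemma adjunction_iff_hom_adjunction: "adjunction C Dc L R \<longleftrightarrow> (\<exists>\<phi>. hom_adjunction C Dc L R \<phi>)"
  by (simp add: adjunction_def hom_adjunction_def)

context hom_adjunction
begin

lemma C_category: "category C" and Dc_category: "category Dc"
  using R_functor by (simp_all add: is_functor_def)

lemma \<phi>_comp_left:
  assumes "d \<in> Obj Dc" "g \<in> Hom C (FObj L d) c" "k \<in> Hom C c c'"
  shows "\<phi> d c' (Comp C k g) = Comp Dc (FMor R k) (\<phi> d c g)"
proof -
  have "c \<in> Obj C" "c' \<in> Obj C" using assms Hom_Obj[OF C_category] by blast+
  moreover have "\<phi> d c g \<in> Hom Dc d (FObj R c)"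
    using \<phi>_bij assms(1,2) \<open>c \<in> Obj C\<close> bij_betwE by blast
  ultimately show ?thesis
    using \<phi>_natural assms id_in_Hom[OF Dc_category] functor_id[OF L_functor]
      comp_id_right[OF C_category] comp_id_right[OF Dc_category] by metis
qed

lemma \<phi>_comp_right:
  assumes d: "d \<in> Obj Dc" and g: "g \<in> Hom C (FObj L d) c" and h: "h \<in> Hom Dc d' d"
  shows "\<phi> d' c (Comp C g (FMor L h)) = Comp Dc (\<phi> d c g) h"
proof -
  have c: "c \<in> Obj C" and d': "d' \<in> Obj Dc"
    using g h Hom_Obj[OF C_category] Hom_Obj[OF Dc_category] by blast+
  have "\<phi> d c g \<in> Hom Dc d (FObj R c)"
    using \<phi>_bij d c g bij_betwE by blast
  then have "Comp Dc (\<phi> d c g) h \<in> Hom Dc d' (FObj R c)"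
    using h comp_in_Hom[OF Dc_category] by blast
  moreover have "Comp C g (FMor L h) \<in> Hom C (FObj L d') c"
    using g h comp_in_Hom[OF C_category] functor_Hom[OF L_functor] by blast
  moreover have "\<phi> d' c (Comp C (CId C c) (Comp C g (FMor L h)))
      = Comp Dc (FMor R (CId C c)) (Comp Dc (\<phi> d c g) h)"
    using \<phi>_natural d d' c h g id_in_Hom[OF C_category c] by blast
  ultimately show ?thesis
    using functor_id[OF R_functor c] comp_id_left[OF C_category] comp_id_left[OF Dc_category] by simp
qed

definition \<psi> :: "'o2 \<Rightarrow> 'o1 \<Rightarrow> 'm2 \<Rightarrow> 'm1" where
  "\<psi> d c = the_inv_into (Hom C (FObj L d) c) (\<phi> d c)"

lemma \<psi>_bij: "d \<in> Obj Dc \<Longrightarrow> c \<in> Obj C \<Longrightarrow> bij_betw (\<psi> d c) (Hom Dc d (FObj R c)) (Hom C (FObj L d) c)"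
  unfolding \<psi>_def using \<phi>_bij by (simp add: bij_betw_the_inv_into)

lemma \<psi>_eqI:
  assumes "d \<in> Obj Dc" "g \<in> Hom C (FObj L d) c" "\<phi> d c g = y"
  shows "\<psi> d c y = g"
proof -
  have "c \<in> Obj C" using assms(2) Hom_Obj[OF C_category] by blast
  then show ?thesis
    unfolding \<psi>_def using assms \<phi>_bij by (simp add: bij_betw_def the_inv_into_f_eq)
qed

lemma
  assumes "d \<in> Obj Dc" "c \<in> Obj C" "y \<in> Hom Dc d (FObj R c)"
  shows \<psi>_Hom: "\<psi> d c y \<in> Hom C (FObj L d) c"
    and \<phi>_\<psi>: "\<phi> d c (\<psi> d c y) = y"
proof -
  show "\<psi> d c y \<in> Hom C (FObj L d) c" using \<psi>_bij[OF assms(1,2)] assms(3) bij_betwE by blast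
  have "bij_betw (\<phi> d c) (Hom C (FObj L d) c) (Hom Dc d (FObj R c))" using \<phi>_bij assms by blast
  then show "\<phi> d c (\<psi> d c y) = y" using assms(3) by (simp add: f_the_inv_into_f_bij_betw \<psi>_def)
qed

lemma \<psi>_comp_left:
  assumes "d \<in> Obj Dc" "c \<in> Obj C" "y \<in> Hom Dc d (FObj R c)" "k \<in> Hom C c c'"
  shows "\<psi> d c' (Comp Dc (FMor R k) y) = Comp C k (\<psi> d c y)"
proof (rule \<psi>_eqI)
  show "d \<in> Obj Dc" by (fact assms(1))
  show "Comp C k (\<psi> d c y) \<in> Hom C (FObj L d) c'"
    using assms \<psi>_Hom comp_in_Hom[OF C_category] by blast
  show "\<phi> d c' (Comp C k (\<psi> d c y)) = Comp Dc (FMor R k) y"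
    using assms \<psi>_Hom[OF assms(1-3)] by (simp add: \<phi>_comp_left \<phi>_\<psi>)
qed

lemma \<psi>_comp_right:
  assumes "d \<in> Obj Dc" "c \<in> Obj C" "y \<in> Hom Dc d (FObj R c)" "h \<in> Hom Dc d' d"
  shows "\<psi> d' c (Comp Dc y h) = Comp C (\<psi> d c y) (FMor L h)"
proof (rule \<psi>_eqI)
  show "d' \<in> Obj Dc" using assms(4) Hom_Obj[OF Dc_category] by blast
  show "Comp C (\<psi> d c y) (FMor L h) \<in> Hom C (FObj L d') c"
    using assms \<psi>_Hom functor_Hom[OF L_functor] comp_in_Hom[OF C_category] by blast
  show "\<phi> d' c (Comp C (\<psi> d c y) (FMor L h)) = Comp Dc y h"
    using assms \<psi>_Hom[OF assms(1-3)] by (simp add: \<phi>_comp_right \<phi>_\<psi>)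
qed


lemma right_adjoint_preserves_limit:
  assumes K: "is_diagram C K" and lim: "is_limit C K X \<pi>"
  shows "is_limit Dc (map_diag R K) (FObj R X) (FMor R \<circ> \<pi>)"
  unfolding is_limit_def
proof (intro conjI allI impI)
  have cone: "is_cone C K X \<pi>" using lim by (simp add: is_limit_def)
  then show "is_cone Dc (map_diag R K) (FObj R X) (FMor R \<circ> \<pi>)"
    by (rule functor_map_cone[OF R_functor K])
  fix Y \<rho> assume \<rho>: "is_cone Dc (map_diag R K) Y \<rho>"
  have Y: "Y \<in> Obj Dc" and X: "X \<in> Obj C" and \<pi>_Hom: "\<And>v. v \<in> DV K \<Longrightarrow> \<pi> v \<in> Hom C X (DObj K v)"
    using \<rho> cone by (simp_all add: is_cone_def)
  have \<rho>_Hom: "\<And>v. v \<in> DV K \<Longrightarrow> \<rho> v \<in> Hom Dc Y (FObj R (DObj K v))"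
    and \<rho>_comm: "\<And>e. e \<in> DE K \<Longrightarrow> Comp Dc (FMor R (DMor K e)) (\<rho> (Src K e)) = \<rho> (Tgt K e)"
    using \<rho> by (simp_all add: is_cone_def)
  have K_Obj: "\<And>v. v \<in> DV K \<Longrightarrow> DObj K v \<in> Obj C"
    and K_edge: "\<And>e. e \<in> DE K \<Longrightarrow> Src K e \<in> DV K \<and> Tgt K e \<in> DV K \<and>
      DMor K e \<in> Hom C (DObj K (Src K e)) (DObj K (Tgt K e))"
    using K by (simp_all add: is_diagram_def)
  define \<tau> where "\<tau> v = \<psi> Y (DObj K v) (\<rho> v)" for v
  have \<tau>: "is_cone C K (FObj L Y) \<tau>"
    unfolding is_cone_def
  proof (intro conjI ballI)
    show "FObj L Y \<in> Obj C" using functor_Obj[OF L_functor Y] .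
    show "\<tau> v \<in> Hom C (FObj L Y) (DObj K v)" if "v \<in> DV K" for v
      unfolding \<tau>_def using \<psi>_Hom Y K_Obj \<rho>_Hom that by blast
    show "Comp C (DMor K e) (\<tau> (Src K e)) = \<tau> (Tgt K e)" if "e \<in> DE K" for e
      unfolding \<tau>_def using \<psi>_comp_left[OF Y K_Obj \<rho>_Hom] K_edge \<rho>_comm that by metis
  qed
  have mediating_iff: "(\<forall>v\<in>DV K. Comp Dc (FMor R (\<pi> v)) w = \<rho> v) \<longleftrightarrow>
      (\<forall>v\<in>DV K. Comp C (\<pi> v) (\<psi> Y X w) = \<tau> v)" if w: "w \<in> Hom Dc Y (FObj R X)" for w
  proof (intro ball_cong refl)
    fix v assume v: "v \<in> DV K"
    have "Comp Dc (FMor R (\<pi> v)) w \<in> Hom Dc Y (FObj R (DObj K v))"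
      using w functor_Hom[OF R_functor \<pi>_Hom[OF v]] comp_in_Hom[OF Dc_category] by blast
    then have "Comp Dc (FMor R (\<pi> v)) w = \<rho> v \<longleftrightarrow>
        \<psi> Y (DObj K v) (Comp Dc (FMor R (\<pi> v)) w) = \<psi> Y (DObj K v) (\<rho> v)"
      using \<psi>_bij[OF Y K_Obj[OF v]] \<rho>_Hom[OF v] by (auto simp: bij_betw_def inj_on_def)
    then show "Comp Dc (FMor R (\<pi> v)) w = \<rho> v \<longleftrightarrow> Comp C (\<pi> v) (\<psi> Y X w) = \<tau> v"
      unfolding \<tau>_def by (simp add: \<psi>_comp_left[OF Y X w \<pi>_Hom[OF v]])
  qed
  have "(\<exists>!w. w \<in> Hom Dc Y (FObj R X) \<and> (\<forall>v\<in>DV K. Comp Dc (FMor R (\<pi> v)) w = \<rho> v)) \<longleftrightarrow>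
      (\<exists>!u. u \<in> Hom C (FObj L Y) X \<and> (\<forall>v\<in>DV K. Comp C (\<pi> v) u = \<tau> v))"
    by (rule bij_betw_ex1_iff[OF \<psi>_bij[OF Y X]]) (rule mediating_iff)
  with lim \<tau> show "\<exists>!w. w \<in> Hom Dc Y (FObj R X) \<and>
      (\<forall>v\<in>DV (map_diag R K). Comp Dc ((FMor R \<circ> \<pi>) v) w = \<rho> v)"
    by (simp add: is_limit_def)
qed

lemma hom_adjunction_op_cat: "hom_adjunction (op_cat Dc) (op_cat C) R L (\<lambda>c d. \<psi> d c)"
  unfolding hom_adjunction_def
proof (intro conjI ballI)
  show "is_functor (op_cat C) (op_cat Dc) R" "is_functor (op_cat Dc) (op_cat C) L"
    using R_functor L_functor by (simp_all add: is_functor_op_cat)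
  show "bij_betw (\<psi> d c) (Hom (op_cat Dc) (FObj R c) d) (Hom (op_cat C) c (FObj L d))"
    if "c \<in> Obj (op_cat C)" "d \<in> Obj (op_cat Dc)" for c d
    using \<psi>_bij that by simp
  fix c c' d d' h g k
  assume c: "c \<in> Obj (op_cat C)" and c': "c' \<in> Obj (op_cat C)" and d: "d \<in> Obj (op_cat Dc)"
    and h: "h \<in> Hom (op_cat C) c' c" and g: "g \<in> Hom (op_cat Dc) (FObj R c) d"
    and k: "k \<in> Hom (op_cat Dc) d d'"
  have "Comp Dc (FMor R h) g \<in> Hom Dc d (FObj R c')"
    using g h functor_Hom[OF R_functor] comp_in_Hom[OF Dc_category] by fastforce
  then show "\<psi> d' c' (Comp (op_cat Dc) k (Comp (op_cat Dc) g (FMor R h)))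
      = Comp (op_cat C) (FMor L k) (Comp (op_cat C) (\<psi> d c g) h)"
    using c c' d g h k by (simp add: \<psi>_comp_right \<psi>_comp_left)
qed

end

lemma right_adjoint_preserves_limit:
  assumes "adjunction C Dc L R" and "is_diagram C K" and "is_limit C K X \<pi>"
  shows "is_limit Dc (map_diag R K) (FObj R X) (FMor R \<circ> \<pi>)"
  using assms by (auto simp: adjunction_iff_hom_adjunction intro: hom_adjunction.right_adjoint_preserves_limit)

lemma adjunction_op_cat: "adjunction C Dc L R \<Longrightarrow> adjunction (op_cat Dc) (op_cat C) R L"
  by (auto simp: adjunction_iff_hom_adjunction intro: hom_adjunction.hom_adjunction_op_cat)

definition add_cone_vertex ::
  "('v,'e,'o,'m) diagram \<Rightarrow> 'v set \<Rightarrow> 'v \<Rightarrow> 'o \<Rightarrow> ('v \<Rightarrow> 'm) \<Rightarrow> ('v \<Rightarrow> 'e) \<Rightarrow> ('v,'e,'o,'m) diagram" where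
  "add_cone_vertex K J v X \<pi> ed =
     \<lparr>DV = insert v (DV K), DE = DE K \<union> ed ` J,
      Src = (\<lambda>e. if e \<in> DE K then Src K e else v),
      Tgt = (\<lambda>e. if e \<in> DE K then Tgt K e else the_inv_into J ed e),
      DObj = (DObj K)(v := X),
      DMor = (\<lambda>e. if e \<in> DE K then DMor K e else \<pi> (the_inv_into J ed e))\<rparr>"

lemma lim_step_iff:
  "lim_step C K J v K' \<longleftrightarrow> J \<subseteq> DV K \<and> v \<notin> DV K \<and>
     (\<exists>X \<pi> ed. is_limit C (restrict_diag K J) X \<pi> \<and> inj_on ed J \<and> ed ` J \<inter> DE K = {} \<and>
        K' = add_cone_vertex K J v X \<pi> ed)"
  by (simp add: lim_step_def add_cone_vertex_def)

lemma map_diag_add_cone_vertex: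
  "map_diag F (add_cone_vertex K J v X \<pi> ed) = add_cone_vertex (map_diag F K) J v (FObj F X) (FMor F \<circ> \<pi>) ed"
  by (simp add: map_diag_def add_cone_vertex_def fun_eq_iff)

lemma is_diagram_add_cone_vertex:
  assumes K: "is_diagram C K" and J: "J \<subseteq> DV K" and v: "v \<notin> DV K"
    and cone: "is_cone C (restrict_diag K J) X \<pi>" and ed: "inj_on ed J" "ed ` J \<inter> DE K = {}"
  shows "is_diagram C (add_cone_vertex K J v X \<pi> ed)"
proof -
  have new_edge: "ed j \<notin> DE K \<and> the_inv_into J ed (ed j) = j \<and> j \<noteq> v" if "j \<in> J" for j
    using that ed J v the_inv_into_f_f by fastforce
  have "finite J" using K J finite_subset by (auto simp: is_diagram_def)
  then show ?thesis
    using K J v cone new_edge unfolding is_diagram_def is_cone_def add_cone_vertex_def by auto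
qed

lemma lim_step_is_diagram: "is_diagram C K \<Longrightarrow> lim_step C K J v K' \<Longrightarrow> is_diagram C K'"
  by (auto simp: lim_step_iff is_limit_def intro: is_diagram_add_cone_vertex)

lemma is_lim_computation_is_diagram:
  assumes "is_lim_computation C A Ds Js vs s"
  shows "i \<le> s \<Longrightarrow> is_diagram C (Ds i)"
proof (induction i)
  case 0
  then show ?case using assms by (simp add: is_lim_computation_def)
next
  case (Suc i)
  have "\<forall>j\<in>{1..s}. lim_step C (Ds (j - 1)) (Js j) (vs j) (Ds j)"
    using assms by (simp add: is_lim_computation_def)
  then have "lim_step C (Ds i) (Js (Suc i)) (vs (Suc i)) (Ds (Suc i))"
    using Suc.prems by (auto dest: bspec[where x = "Suc i"])
  then show ?case using Suc by (simp add: lim_step_is_diagram)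
qed

lemma lim_step_map_diag:
  fixes K :: "('v,'e,'o1,'m1) diagram"
  assumes preserves: "\<And>(Q :: ('v,'e,'o1,'m1) diagram) X \<pi>. is_diagram C Q \<Longrightarrow> is_limit C Q X \<pi> \<Longrightarrow>
      is_limit D (map_diag F Q) (FObj F X) (FMor F \<circ> \<pi>)"
    and K: "is_diagram C K" and step: "lim_step C K J v K'"
  shows "lim_step D (map_diag F K) J v (map_diag F K')"
proof -
  obtain X \<pi> ed where J: "J \<subseteq> DV K" and v: "v \<notin> DV K" and lim: "is_limit C (restrict_diag K J) X \<pi>"
    and ed: "inj_on ed J" "ed ` J \<inter> DE K = {}" and K': "K' = add_cone_vertex K J v X \<pi> ed"
    using step by (auto simp: lim_step_iff)
  have "is_limit D (restrict_diag (map_diag F K) J) (FObj F X) (FMor F \<circ> \<pi>)"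
    using preserves[OF is_diagram_restrict_diag[OF K J] lim] by (simp add: restrict_diag_map_diag)
  then show ?thesis
    using J v ed unfolding lim_step_iff K' map_diag_add_cone_vertex by auto
qed

lemma is_lim_computation_map_diag:
  fixes Ds :: "nat \<Rightarrow> (nat,nat,'o1,'m1) diagram"
  assumes F: "is_functor C D F"
    and preserves: "\<And>(K :: (nat,nat,'o1,'m1) diagram) X \<pi>. is_diagram C K \<Longrightarrow> is_limit C K X \<pi> \<Longrightarrow>
      is_limit D (map_diag F K) (FObj F X) (FMor F \<circ> \<pi>)"
    and A: "FMor F ` A \<subseteq> A'" and comp: "is_lim_computation C A Ds Js vs s"
  shows "is_lim_computation D A' (\<lambda>i. map_diag F (Ds i)) Js vs s"
  unfolding is_lim_computation_def
proof (intro conjI ballI)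
  show "is_diagram D (map_diag F (Ds 0))"
    using comp by (simp add: is_lim_computation_def is_diagram_map_diag[OF F])
  show "DMor (map_diag F (Ds 0)) e \<in> A'" if "e \<in> DE (map_diag F (Ds 0))" for e
    using comp A that by (auto simp: is_lim_computation_def)
  show "lim_step D (map_diag F (Ds (i - 1))) (Js i) (vs i) (map_diag F (Ds i))" if "i \<in> {1..s}" for i
    using comp that is_lim_computation_is_diagram[OF comp, of "i - 1"]
    by (auto simp: is_lim_computation_def intro: lim_step_map_diag[OF preserves])
  show "\<forall>i j. 1 \<le> i \<and> i < j \<and> j \<le> s \<and> vs i \<in> Js j \<longrightarrow> Js i \<subseteq> Js j"
    using comp by (simp add: is_lim_computation_def)
qed

lemma c_lim_le_cost:
  "is_lim_computation C A Ds Js vs s \<Longrightarrow> iso_subdiag K (Ds s) \<Longrightarrow> c_lim C A K \<le> enat (s + card (DE (Ds 0)))"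
  unfolding c_lim_def by (rule Inf_lower) blast

lemma c_colim_le_cost:
  "is_colim_computation C A Ds Js vs s \<Longrightarrow> iso_subdiag K (Ds s) \<Longrightarrow> c_colim C A K \<le> enat (s + card (DE (Ds 0)))"
  unfolding c_colim_def by (rule Inf_lower) blast

lemma c_lim_map_diag_le:
  fixes F :: "('o1,'m1,'o2,'m2) ftor"
  assumes F: "is_functor C D F"
    and preserves: "\<And>(K :: (nat,nat,'o1,'m1) diagram) X \<pi>. is_diagram C K \<Longrightarrow> is_limit C K X \<pi> \<Longrightarrow>
      is_limit D (map_diag F K) (FObj F X) (FMor F \<circ> \<pi>)"
    and A: "FMor F ` A \<subseteq> A'"
  shows "c_lim D A' (map_diag F G) \<le> c_lim C A G"
proof -
  have "c_lim D A' (map_diag F G) \<le> enat (s + card (DE (Ds 0)))"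
    if "is_lim_computation C A Ds Js vs s" and "iso_subdiag G (Ds s)" for Ds Js vs s
    using c_lim_le_cost[OF is_lim_computation_map_diag[OF F preserves A that(1)] iso_subdiag_map_diag[OF that(2)]]
    by simp
  then show ?thesis
    unfolding c_lim_def[of C A G] by (auto intro: Inf_greatest)
qed

lemma colim_step_iff_lim_step_op:
  "colim_step C K J v K' \<longleftrightarrow> lim_step (op_cat C) (op_diag K) J v (op_diag K')"
  unfolding colim_step_def lim_step_def restrict_diag_op_diag is_limit_op op_diag_eq_iff
  by (simp add: op_diag_def cong: if_cong)

lemma is_colim_computation_iff_op:
  "is_colim_computation C A Ds Js vs s \<longleftrightarrow> is_lim_computation (op_cat C) A (\<lambda>i. op_diag (Ds i)) Js vs s"
  by (simp add: is_colim_computation_def is_lim_computation_def colim_step_iff_lim_step_op)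

lemma c_colim_eq_c_lim_op: "c_colim C A K = c_lim (op_cat C) A (op_diag K)"
proof (rule antisym)
  show "c_colim C A K \<le> c_lim (op_cat C) A (op_diag K)"
    unfolding c_lim_def[of "op_cat C"]
  proof (rule Inf_greatest, clarify)
    fix Ds Js vs s assume "is_lim_computation (op_cat C) A Ds Js vs s" "iso_subdiag (op_diag K) (Ds s)"
    then show "c_colim C A K \<le> enat (s + card (DE (Ds 0)))"
      using c_colim_le_cost[of C A "\<lambda>i. op_diag (Ds i)" Js vs s K]
        iso_subdiag_op_diag[of K "op_diag (Ds s)"]
      by (simp add: is_colim_computation_iff_op)
  qed
  show "c_lim (op_cat C) A (op_diag K) \<le> c_colim C A K"
    unfolding c_colim_def[of C]
  proof (rule Inf_greatest, clarify)
    fix Ds Js vs s assume "is_colim_computation C A Ds Js vs s" "iso_subdiag K (Ds s)"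
    then show "c_lim (op_cat C) A (op_diag K) \<le> enat (s + card (DE (Ds 0)))"
      using c_lim_le_cost[of "op_cat C" A "\<lambda>i. op_diag (Ds i)" Js vs s "op_diag K"]
      by (simp add: is_colim_computation_iff_op)
  qed
qed

theorem lemma6p1:
  fixes C :: "('o1,'m1) cat" and Dc :: "('o2,'m2) cat"
    and L :: "('o2,'m2,'o1,'m1) ftor" and R :: "('o1,'m1,'o2,'m2) ftor"
    and A :: "'m1 set" and A' :: "'m2 set"
    and D :: "('v,'e,'o1,'m1) diagram" and D' :: "('w,'f,'o2,'m2) diagram"
  assumes "adjunction C Dc L R"
    and "A \<subseteq> Mor C" and "A' \<subseteq> Mor Dc"
    and "FMor R ` A \<subseteq> A'" and "FMor L ` A' \<subseteq> A"
    and "is_diagram C D" and "is_diagram Dc D'"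
  shows "c_lim Dc A' (map_diag R D) \<le> c_lim C A D \<and>
         c_colim C A (map_diag L D') \<le> c_colim Dc A' D'"
  \<comment> \<open>Only the adjunction and the two inclusions between basic morphisms are needed.\<close>
proof
  have R: "is_functor C Dc R" and L: "is_functor Dc C L"
    using assms(1) by (simp_all add: adjunction_def)
  show "c_lim Dc A' (map_diag R D) \<le> c_lim C A D"
    using c_lim_map_diag_le[OF R right_adjoint_preserves_limit[OF assms(1)] assms(4)] .
  have "c_lim (op_cat C) A (map_diag L (op_diag D')) \<le> c_lim (op_cat Dc) A' (op_diag D')"
    using c_lim_map_diag_le[OF is_functor_op_cat[OF L]
        right_adjoint_preserves_limit[OF adjunction_op_cat[OF assms(1)]] assms(5)] .
  then show "c_colim C A (map_diag L D') \<le> c_colim Dc A' D'"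
    by (simp add: c_colim_eq_c_lim_op map_diag_op_diag)
qed

end
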